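(* If $S$ is a T2R semigroup, with $S=S_0\cup S_1$ as in the definition, then there is an element $b\in S_0$ such that $|J_b|=2$.
   Context: A semigroup $S$ is a $\Delta$-semigroup if the lattice of all congruences of $S$ is a chain with respect to inclusion. A semigroup $N$ with zero $0$ is nil if every element has some power equal to $0$; non-trivial means having more than one element. A T2R semigroup is a $\Delta$-semigroup $S$ which is the disjoint union of a non-trivial nil ideal $S_0$ (with zero $0$, which is then the zero of $S$) and a subsemigroup $S_1$ which is a two-element right zero semigroup (i.e. $S_1=\{u,v\}$ with $xy=y$ for $x,y\in S_1$). $S^1$ denotes $S$ with an identity $1$ adjoined. For $a\in S$: $J(a)=S^1aS^1$ and $J_a=\{s\in S:J(s)=J(a)\}$. *)

theory Defs
  imports Main
begin

definition semigroup :: "'a set \<Rightarrow> ('a \<Rightarrow> 'a \<Rightarrow> 'a) \<Rightarrow> bool" where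
  "semigroup S m \<longleftrightarrow> (\<forall>x\<in>S. \<forall>y\<in>S. m x y \<in> S) \<and>
     (\<forall>x\<in>S. \<forall>y\<in>S. \<forall>z\<in>S. m (m x y) z = m x (m y z))"

definition congruence :: "'a set \<Rightarrow> ('a \<Rightarrow> 'a \<Rightarrow> 'a) \<Rightarrow> ('a \<times> 'a) set \<Rightarrow> bool" where
  "congruence S m R \<longleftrightarrow> equiv S R \<and>
     (\<forall>a b c. (a, b) \<in> R \<longrightarrow> c \<in> S \<longrightarrow> (m c a, m c b) \<in> R \<and> (m a c, m b c) \<in> R)"

definition Delta_semigroup :: "'a set \<Rightarrow> ('a \<Rightarrow> 'a \<Rightarrow> 'a) \<Rightarrow> bool" where
  "Delta_semigroup S m \<longleftrightarrow> semigroup S m \<and>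
     (\<forall>R1 R2. congruence S m R1 \<longrightarrow> congruence S m R2 \<longrightarrow> R1 \<subseteq> R2 \<or> R2 \<subseteq> R1)"

text \<open>spow m x n = x^(n+1)\<close>
fun spow :: "('a \<Rightarrow> 'a \<Rightarrow> 'a) \<Rightarrow> 'a \<Rightarrow> nat \<Rightarrow> 'a" where
  "spow m x 0 = x"
| "spow m x (Suc n) = m (spow m x n) x"

definition ideal :: "'a set \<Rightarrow> ('a \<Rightarrow> 'a \<Rightarrow> 'a) \<Rightarrow> 'a set \<Rightarrow> bool" where
  "ideal S m I \<longleftrightarrow> I \<subseteq> S \<and> I \<noteq> {} \<and> (\<forall>s\<in>S. \<forall>a\<in>I. m s a \<in> I \<and> m a s \<in> I)"

definition nontrivial_nil_with_zero :: "'a set \<Rightarrow> ('a \<Rightarrow> 'a \<Rightarrow> 'a) \<Rightarrow> 'a \<Rightarrow> bool" where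
  "nontrivial_nil_with_zero N m z \<longleftrightarrow> z \<in> N \<and>
     (\<forall>x\<in>N. m z x = z \<and> m x z = z) \<and>
     (\<forall>x\<in>N. \<exists>n. spow m x n = z) \<and>
     (\<exists>x\<in>N. x \<noteq> z)"

definition right_zero_2 :: "'a set \<Rightarrow> ('a \<Rightarrow> 'a \<Rightarrow> 'a) \<Rightarrow> bool" where
  "right_zero_2 T m \<longleftrightarrow> card T = 2 \<and> (\<forall>x\<in>T. \<forall>y\<in>T. m x y = y)"

definition T2R :: "'a set \<Rightarrow> ('a \<Rightarrow> 'a \<Rightarrow> 'a) \<Rightarrow> 'a set \<Rightarrow> 'a set \<Rightarrow> bool" where
  "T2R S m S0 S1 \<longleftrightarrow> Delta_semigroup S m \<and> S = S0 \<union> S1 \<and> S0 \<inter> S1 = {} \<and>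
     ideal S m S0 \<and> (\<exists>z. nontrivial_nil_with_zero S0 m z) \<and> right_zero_2 S1 m"

text \<open>J(a) = S^1 a S^1\<close>
definition principal_ideal :: "'a set \<Rightarrow> ('a \<Rightarrow> 'a \<Rightarrow> 'a) \<Rightarrow> 'a \<Rightarrow> 'a set" where
  "principal_ideal S m a = {a} \<union> {m s a |s. s \<in> S} \<union> {m a t |t. t \<in> S} \<union> {m (m s a) t |s t. s \<in> S \<and> t \<in> S}"

definition J_class :: "'a set \<Rightarrow> ('a \<Rightarrow> 'a \<Rightarrow> 'a) \<Rightarrow> 'a \<Rightarrow> 'a set" where
  "J_class S m a = {s \<in> S. principal_ideal S m s = principal_ideal S m a}"

end

theory Submission
  imports Defs
begin

text \<open>Write S = S0 \<union> {u, v}. Since the congruences of S form a chain and the Rees congruence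
  of S0 does not identify u and v, every congruence identifying u and v contains it.
  Applied to three congruences (the kernel of the left action of S0, and the congruences
  collapsing uS0 and {u, v}), this shows that some c \<in> S0 separates u and v: cu \<noteq> cv.
  Now cu v = cv and cv u = cu, so cu and cv are J-equivalent, and one of them, b, is nonzero.
  Conversely, if y = s b t and b = s' y t' with s, t, s', t' \<in> S^1, then b = (s' s) b (t t');
  as S0 is nil and b \<noteq> 0, neither s' s nor t t' lies in S0, hence s, t \<in> {1, u, v}.
  Since u, v are right zeros, a left factor from {u, v} fixes b, so y \<in> {b, bu, bv} = {cu, cv}.\<close>

fun omult :: "('a \<Rightarrow> 'a \<Rightarrow> 'a) \<Rightarrow> 'a option \<Rightarrow> 'a option \<Rightarrow> 'a option" where
  "omult m None y = y"
| "omult m x None = x"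
| "omult m (Some x) (Some y) = Some (m x y)"

text \<open>The monoid S^1 is modelled on \<open>'a option\<close>, with \<open>None\<close> as the adjoined identity.\<close>

definition with_one :: "'a set \<Rightarrow> 'a option set" where
  "with_one S = insert None (Some ` S)"

lemma semigroup_closed: "semigroup S m \<Longrightarrow> x \<in> S \<Longrightarrow> y \<in> S \<Longrightarrow> m x y \<in> S"
  unfolding semigroup_def by blast

lemma semigroup_assoc:
  "semigroup S m \<Longrightarrow> x \<in> S \<Longrightarrow> y \<in> S \<Longrightarrow> w \<in> S \<Longrightarrow> m (m x y) w = m x (m y w)"
  unfolding semigroup_def by blast

lemma omult_closed:
  "semigroup S m \<Longrightarrow> x \<in> with_one S \<Longrightarrow> y \<in> with_one S \<Longrightarrow> omult m x y \<in> with_one S"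
  by (auto simp: with_one_def semigroup_closed)

lemma omult_assoc:
  "semigroup S m \<Longrightarrow> x \<in> with_one S \<Longrightarrow> y \<in> with_one S \<Longrightarrow> w \<in> with_one S \<Longrightarrow>
    omult m (omult m x y) w = omult m x (omult m y w)"
  by (auto simp: with_one_def semigroup_assoc)

lemma principal_ideal_with_one:
  "principal_ideal S m a =
    {x. \<exists>s\<in>with_one S. \<exists>t\<in>with_one S. omult m (omult m s (Some a)) t = Some x}"
proof -
  have "x \<in> principal_ideal S m a \<longleftrightarrow>
      (\<exists>s\<in>with_one S. \<exists>t\<in>with_one S. omult m (omult m s (Some a)) t = Some x)" for x
  proof
    assume "x \<in> principal_ideal S m a"
    then consider "x = a" | s where "s \<in> S" "x = m s a" | t where "t \<in> S" "x = m a t"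
      | s t where "s \<in> S" "t \<in> S" "x = m (m s a) t"
      unfolding principal_ideal_def by blast
    then show "\<exists>s\<in>with_one S. \<exists>t\<in>with_one S. omult m (omult m s (Some a)) t = Some x"
      by cases (force simp: with_one_def)+
  next
    assume "\<exists>s\<in>with_one S. \<exists>t\<in>with_one S. omult m (omult m s (Some a)) t = Some x"
    then show "x \<in> principal_ideal S m a"
      by (auto simp: with_one_def principal_ideal_def)
  qed
  then show ?thesis by blast
qed

lemma principal_ideal_subset:
  assumes S: "semigroup S m" and a: "a \<in> S" and y: "y \<in> principal_ideal S m a"
  shows "principal_ideal S m y \<subseteq> principal_ideal S m a"
proof
  fix x assume "x \<in> principal_ideal S m y"
  then obtain s t where st: "s \<in> with_one S" "t \<in> with_one S"
    and x: "omult m (omult m s (Some y)) t = Some x"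
    by (auto simp: principal_ideal_with_one)
  obtain s' t' where st': "s' \<in> with_one S" "t' \<in> with_one S"
    and y: "omult m (omult m s' (Some a)) t' = Some y"
    using y by (auto simp: principal_ideal_with_one)
  have aS: "Some a \<in> with_one S" using a by (simp add: with_one_def)
  have "Some x = omult m (omult m s (omult m (omult m s' (Some a)) t')) t"
    using x y by simp
  also have "\<dots> = omult m (omult m (omult m s s') (Some a)) (omult m t' t)"
    using st st' aS by (simp add: omult_assoc[OF S] omult_closed[OF S])
  finally show "x \<in> principal_ideal S m a"
    using st st' by (force simp: principal_ideal_with_one intro: omult_closed S)
qed

lemma mem_principal_ideal_self: "a \<in> principal_ideal S m a"
  by (simp add: principal_ideal_def)

lemma mult_mem_principal_ideal: "t \<in> S \<Longrightarrow> m a t \<in> principal_ideal S m a"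
  by (auto simp: principal_ideal_def)

lemma mem_J_classI:
  assumes "semigroup S m" "b \<in> S" "y \<in> S"
    and "y \<in> principal_ideal S m b" "b \<in> principal_ideal S m y"
  shows "y \<in> J_class S m b"
  using principal_ideal_subset[of S m] assms by (auto simp: J_class_def)

definition stabilisers :: "'a set \<Rightarrow> ('a \<Rightarrow> 'a \<Rightarrow> 'a) \<Rightarrow> 'a \<Rightarrow> ('a option \<times> 'a option) set" where
  "stabilisers S m b =
    {(P, Q). P \<in> with_one S \<and> Q \<in> with_one S \<and> omult m (omult m P (Some b)) Q = Some b}"

lemma stabilisers_mult:
  assumes S: "semigroup S m" and b: "b \<in> S"
    and PQ: "(P, Q) \<in> stabilisers S m b" and PQ': "(P', Q') \<in> stabilisers S m b"
  shows "(omult m P P', omult m Q' Q) \<in> stabilisers S m b"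
proof -
  have bS: "Some b \<in> with_one S" using b by (simp add: with_one_def)
  have in_S: "P \<in> with_one S" "Q \<in> with_one S" "P' \<in> with_one S" "Q' \<in> with_one S"
    using PQ PQ' by (auto simp: stabilisers_def)
  have "Some b = omult m (omult m P (omult m (omult m P' (Some b)) Q')) Q"
    using PQ PQ' by (simp add: stabilisers_def)
  also have "\<dots> = omult m (omult m (omult m P P') (Some b)) (omult m Q' Q)"
    using in_S bS by (simp add: omult_assoc[OF S] omult_closed[OF S])
  finally show ?thesis using in_S by (simp add: stabilisers_def omult_closed[OF S])
qed

lemma mem_J_classE:
  assumes S: "semigroup S m" and b: "b \<in> S" and y: "y \<in> J_class S m b"
  obtains s t s' t' where "s \<in> with_one S" "t \<in> with_one S" "s' \<in> with_one S" "t' \<in> with_one S"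
    "omult m (omult m s (Some b)) t = Some y"
    "(omult m s' s, omult m t t') \<in> stabilisers S m b"
proof -
  have "y \<in> principal_ideal S m b" "b \<in> principal_ideal S m y"
    using y mem_principal_ideal_self[of _ S m] by (auto simp: J_class_def)
  then obtain s t s' t' where st: "s \<in> with_one S" "t \<in> with_one S" "s' \<in> with_one S" "t' \<in> with_one S"
    and ys: "omult m (omult m s (Some b)) t = Some y"
    and bs: "omult m (omult m s' (Some y)) t' = Some b"
    by (auto simp: principal_ideal_with_one)
  have bS: "Some b \<in> with_one S" using b by (simp add: with_one_def)
  have "Some b = omult m (omult m s' (omult m (omult m s (Some b)) t)) t'"
    using ys bs by simp
  also have "\<dots> = omult m (omult m (omult m s' s) (Some b)) (omult m t t')"
    using st bS by (simp add: omult_assoc[OF S] omult_closed[OF S])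
  finally show ?thesis
    using that st ys omult_closed[OF S] by (simp add: stabilisers_def)
qed

definition collapse :: "'a set \<Rightarrow> 'a set \<Rightarrow> ('a \<times> 'a) set" where
  "collapse S A = {(x, y). x \<in> S \<and> y \<in> S \<and> (x = y \<or> x \<in> A \<and> y \<in> A)}"

lemma equiv_collapse_Un:
  "A \<subseteq> S \<Longrightarrow> B \<subseteq> S \<Longrightarrow> A \<inter> B = {} \<Longrightarrow> equiv S (collapse S A \<union> collapse S B)"
  unfolding equiv_def refl_on_def sym_def trans_def collapse_def by blast

lemma equiv_collapse: "A \<subseteq> S \<Longrightarrow> equiv S (collapse S A)"
  using equiv_collapse_Un[of A S "{}"] by (simp add: collapse_def Un_absorb2 subset_iff)

lemma ideal_subset: "ideal S m I \<Longrightarrow> I \<subseteq> S"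
  unfolding ideal_def by blast

lemma ideal_mult: "ideal S m I \<Longrightarrow> s \<in> S \<Longrightarrow> a \<in> I \<Longrightarrow> m s a \<in> I \<and> m a s \<in> I"
  unfolding ideal_def by blast

lemma congruence_collapse_ideal:
  assumes "semigroup S m" "ideal S m I"
  shows "congruence S m (collapse S I)"
  using assms equiv_collapse[OF ideal_subset] ideal_mult[OF assms(2)] semigroup_closed[OF assms(1)]
  unfolding congruence_def by (auto simp: collapse_def)

lemma congruence_left_kernel:
  assumes S: "semigroup S m" and I: "ideal S m I"
  shows "congruence S m {(x, y). x \<in> S \<and> y \<in> S \<and> (\<forall>s\<in>I. m s x = m s y)}"
    (is "congruence S m ?K")
proof -
  have "(m c a, m c b) \<in> ?K \<and> (m a c, m b c) \<in> ?K" if "(a, b) \<in> ?K" "c \<in> S" for a b c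
  proof -
    have ab: "a \<in> S" "b \<in> S" "\<And>s. s \<in> I \<Longrightarrow> m s a = m s b" using that by auto
    have sS: "s \<in> S" if "s \<in> I" for s using that ideal_subset[OF I] by blast
    have "m s (m c a) = m s (m c b)" if s: "s \<in> I" for s
    proof -
      have "m s (m c a) = m (m s c) a" using semigroup_assoc[OF S sS[OF s] \<open>c \<in> S\<close> ab(1)] by simp
      also have "\<dots> = m (m s c) b" using ab(3) ideal_mult[OF I \<open>c \<in> S\<close> s] by simp
      also have "\<dots> = m s (m c b)" using semigroup_assoc[OF S sS[OF s] \<open>c \<in> S\<close> ab(2)] by simp
      finally show ?thesis .
    qed
    moreover have "m s (m a c) = m s (m b c)" if s: "s \<in> I" for s
      using semigroup_assoc[OF S sS[OF s] ab(1) \<open>c \<in> S\<close>] semigroup_assoc[OF S sS[OF s] ab(2) \<open>c \<in> S\<close>]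
        ab(3)[OF s] by simp
    ultimately show ?thesis using ab \<open>c \<in> S\<close> by (simp add: semigroup_closed[OF S])
  qed
  moreover have "equiv S ?K"
    unfolding equiv_def refl_on_def sym_def trans_def by auto
  ultimately show ?thesis unfolding congruence_def by blast
qed

locale nil_ideal =
  fixes S N :: "'a set" and m :: "'a \<Rightarrow> 'a \<Rightarrow> 'a" and z :: 'a
  assumes semigroup: "semigroup S m"
    and ideal: "ideal S m N"
    and zero_mem: "z \<in> N"
    and zero: "x \<in> N \<Longrightarrow> m z x = z \<and> m x z = z"
    and nil: "x \<in> N \<Longrightarrow> \<exists>n. spow m x n = z"
begin

lemma N_subset: "N \<subseteq> S"
  using ideal by (rule ideal_subset)

lemma zero_absorbing: "x \<in> S \<Longrightarrow> m z x = z \<and> m x z = z"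
proof -
  assume x: "x \<in> S"
  have z: "z \<in> S" using zero_mem N_subset by blast
  have zx: "m z x \<in> N" "m x z \<in> N" using ideal_mult[OF ideal x zero_mem] by auto
  have "m z x = m z (m z x)"
    using zero[OF zero_mem] semigroup_assoc[OF semigroup z z x] by simp
  moreover have "m x z = m (m x z) z"
    using zero[OF zero_mem] semigroup_assoc[OF semigroup x z z] by simp
  ultimately show ?thesis using zero zx by metis
qed

lemma stabilisers_left_spow:
  assumes b: "b \<in> S" and p: "p \<in> N" and pQ: "(Some p, Q) \<in> stabilisers S m b"
  shows "\<exists>Q'. (Some (spow m p n), Q') \<in> stabilisers S m b"
proof (induction n)
  case 0 then show ?case using pQ by auto
next
  case (Suc n)
  then obtain Q' where "(Some (spow m p n), Q') \<in> stabilisers S m b" ..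
  from stabilisers_mult[OF semigroup b this pQ] show ?case by auto
qed

lemma stabilisers_right_spow:
  assumes b: "b \<in> S" and q: "q \<in> N" and Pq: "(P, Some q) \<in> stabilisers S m b"
  shows "\<exists>P'. (P', Some (spow m q n)) \<in> stabilisers S m b"
proof (induction n)
  case 0 then show ?case using Pq by auto
next
  case (Suc n)
  then obtain P' where "(P', Some (spow m q n)) \<in> stabilisers S m b" ..
  from stabilisers_mult[OF semigroup b Pq this] show ?case by auto
qed

text \<open>Since N is nil, a stabiliser pair with a factor in N can be raised to a power
  in which that factor becomes the zero.\<close>
lemma stabilised_by_nil_eq_zero:
  assumes b: "b \<in> S" and PQ: "(P, Q) \<in> stabilisers S m b" and nil_factor: "P \<in> Some ` N \<or> Q \<in> Some ` N"
  shows "b = z"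
proof -
  have "\<exists>P' Q'. (P', Q') \<in> stabilisers S m b \<and> (P' = Some z \<or> Q' = Some z)"
    using nil_factor
  proof
    assume "P \<in> Some ` N"
    then obtain p where p: "p \<in> N" "P = Some p" by blast
    obtain n where "spow m p n = z" using nil[OF p(1)] ..
    then show ?thesis using stabilisers_left_spow[OF b p(1)] PQ p(2) by metis
  next
    assume "Q \<in> Some ` N"
    then obtain q where q: "q \<in> N" "Q = Some q" by blast
    obtain n where "spow m q n = z" using nil[OF q(1)] ..
    then show ?thesis using stabilisers_right_spow[OF b q(1)] PQ q(2) by metis
  qed
  then obtain P' Q' where PQ': "(P', Q') \<in> stabilisers S m b" "P' = Some z \<or> Q' = Some z" by blast
  have absorb: "x \<in> with_one S \<Longrightarrow> omult m x (Some z) = Some z \<and> omult m (Some z) x = Some z" for x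
    using zero_absorbing by (auto simp: with_one_def)
  have "omult m P' (Some b) \<in> with_one S"
    using PQ'(1) b omult_closed[OF semigroup, of P' "Some b"] by (simp add: stabilisers_def with_one_def)
  then show "b = z"
    using PQ' absorb zero_absorbing[OF b] by (auto simp: stabilisers_def)
qed

end

locale T2R_decomposition = nil_ideal S S0 m z for S S0 :: "'a set" and m z +
  fixes u v :: 'a
  assumes congruences_chain: "congruence S m R1 \<Longrightarrow> congruence S m R2 \<Longrightarrow> R1 \<subseteq> R2 \<or> R2 \<subseteq> R1"
    and carrier: "S = S0 \<union> {u, v}"
    and u_neq_v: "u \<noteq> v" and u_notin: "u \<notin> S0" and v_notin: "v \<notin> S0"
    and right_zero: "x \<in> {u, v} \<Longrightarrow> y \<in> {u, v} \<Longrightarrow> m x y = y"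
    and nontrivial: "\<exists>x\<in>S0. x \<noteq> z"
begin

lemma u_mem: "u \<in> S" and v_mem: "v \<in> S"
  using carrier by auto

lemma collapse_S0_subset: "congruence S m R \<Longrightarrow> (u, v) \<in> R \<Longrightarrow> collapse S S0 \<subseteq> R"
  using congruences_chain[OF congruence_collapse_ideal[OF semigroup ideal], of R] u_neq_v u_notin
  by (auto simp: collapse_def)

lemma related_to_zero: "congruence S m R \<Longrightarrow> (u, v) \<in> R \<Longrightarrow> x \<in> S0 \<Longrightarrow> (x, z) \<in> R"
  using collapse_S0_subset zero_mem N_subset by (auto simp: collapse_def)

lemma right_zero_fixes_image_u: "d \<in> S0 \<Longrightarrow> w \<in> {u, v} \<Longrightarrow> m w (m u d) = m u d"
  using semigroup_assoc[OF semigroup _ u_mem, of w d] right_zero[of w u] u_mem v_mem N_subset by auto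

lemma mult_S0_eq_zero_if_unseparated:
  assumes sep: "\<And>c. c \<in> S0 \<Longrightarrow> m c u = m c v" and x: "x \<in> S0" and y: "y \<in> S0"
  shows "m x y = z"
proof -
  let ?K = "{(x, y). x \<in> S \<and> y \<in> S \<and> (\<forall>s\<in>S0. m s x = m s y)}"
  have "(u, v) \<in> ?K" using sep u_mem v_mem by auto
  then have "(y, z) \<in> ?K"
    using related_to_zero[OF congruence_left_kernel[OF semigroup ideal]] y by blast
  then show ?thesis using x zero_absorbing N_subset by auto
qed

lemma S0_subset_image_u_if_unseparated:
  assumes sep: "\<And>c. c \<in> S0 \<Longrightarrow> m c u = m c v" and x: "x \<in> S0"
  shows "x \<in> m u ` S0"
proof -
  define L where "L = m u ` S0"
  have L_S0: "L \<subseteq> S0" using ideal_mult[OF ideal u_mem] by (auto simp: L_def)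
  have L_right_ideal: "m a c \<in> L" if "a \<in> L" "c \<in> S" for a c
  proof -
    obtain d where d: "d \<in> S0" "a = m u d" using \<open>a \<in> L\<close> by (auto simp: L_def)
    then have "m a c = m u (m d c)"
      using semigroup_assoc[OF semigroup u_mem _ \<open>c \<in> S\<close>] N_subset by auto
    then show ?thesis using ideal_mult[OF ideal \<open>c \<in> S\<close> d(1)] by (auto simp: L_def)
  qed
  have uv_fix_L: "m w a = a" if "a \<in> L" "w \<in> {u, v}" for a w
    using that right_zero_fixes_image_u by (auto simp: L_def)
  have uv_mult_S0: "m w c \<in> L" if "c \<in> S0" "w \<in> {u, v}" for c w
  proof -
    have w: "w \<in> S" using that(2) u_mem v_mem by blast
    have "m u (m w c) = m w c"
      using semigroup_assoc[OF semigroup u_mem w, of c] right_zero[of u w] that N_subset by auto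
    then show ?thesis using ideal_mult[OF ideal w \<open>c \<in> S0\<close>] by (force simp: L_def)
  qed
  let ?R = "collapse S L \<union> collapse S {u, v}"
  have "equiv S ?R"
    using L_S0 N_subset u_mem v_mem u_notin v_notin by (intro equiv_collapse_Un) auto
  moreover have "(m c a, m c b) \<in> ?R \<and> (m a c, m b c) \<in> ?R" if ab: "(a, b) \<in> ?R" and "c \<in> S" for a b c
  proof -
    have closed: "m c a \<in> S" "m c b \<in> S" "m a c \<in> S" "m b c \<in> S"
      using ab \<open>c \<in> S\<close> semigroup_closed[OF semigroup] by (auto simp: collapse_def)
    consider "a = b" | "a \<in> L" "b \<in> L" | "a \<in> {u, v}" "b \<in> {u, v}"
      using ab by (auto simp: collapse_def)
    then show ?thesis
    proof cases
      case 1 then show ?thesis using closed by (auto simp: collapse_def)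
    next
      case 2
      have "m c a = m c b \<or> m c a \<in> L \<and> m c b \<in> L"
        using 2 L_S0 uv_fix_L mult_S0_eq_zero_if_unseparated[OF sep] \<open>c \<in> S\<close> carrier
        by (cases "c \<in> S0") (auto simp: subset_iff)
      then show ?thesis using 2 closed L_right_ideal \<open>c \<in> S\<close> by (auto simp: collapse_def)
    next
      case 3
      have "m c a = m c b \<or> m c a \<in> {u, v} \<and> m c b \<in> {u, v}"
        using 3 sep right_zero \<open>c \<in> S\<close> carrier by (cases "c \<in> S0") auto
      moreover have "m a c = m b c \<or> m a c \<in> L \<and> m b c \<in> L"
        using 3 uv_mult_S0 right_zero \<open>c \<in> S\<close> carrier by (cases "c \<in> S0") auto
      ultimately show ?thesis using closed by (auto simp: collapse_def)
    qed
  qed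
  ultimately have "congruence S m ?R" unfolding congruence_def by blast
  moreover have "(u, v) \<in> ?R" using u_mem v_mem by (auto simp: collapse_def)
  ultimately have "(x, z) \<in> ?R" using related_to_zero x by blast
  moreover have "z \<in> L"
    using zero_absorbing[OF u_mem] zero_mem unfolding L_def by (metis image_eqI)
  ultimately show ?thesis using x u_notin v_notin by (auto simp: collapse_def L_def)
qed

lemma separating_element: "\<exists>c\<in>S0. m c u \<noteq> m c v"
proof (rule ccontr)
  assume "\<not> ?thesis"
  then have sep: "\<And>c. c \<in> S0 \<Longrightarrow> m c u = m c v" by blast
  have uv_fix: "m w c = c" if "c \<in> S0" "w \<in> {u, v}" for c w
    using S0_subset_image_u_if_unseparated[OF sep \<open>c \<in> S0\<close>] that right_zero_fixes_image_u by auto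
  let ?R = "collapse S {u, v}"
  have "equiv S ?R" using u_mem v_mem by (intro equiv_collapse) auto
  moreover have "(m c a, m c b) \<in> ?R \<and> (m a c, m b c) \<in> ?R" if ab: "(a, b) \<in> ?R" and "c \<in> S" for a b c
  proof -
    have closed: "m c a \<in> S" "m c b \<in> S" "m a c \<in> S" "m b c \<in> S"
      using ab \<open>c \<in> S\<close> semigroup_closed[OF semigroup] by (auto simp: collapse_def)
    have "a = b \<or> a \<in> {u, v} \<and> b \<in> {u, v}" using ab by (auto simp: collapse_def)
    moreover have "c \<in> S0 \<or> c \<in> {u, v}" using \<open>c \<in> S\<close> carrier by blast
    ultimately show ?thesis
      using closed sep uv_fix right_zero by (auto simp: collapse_def)
  qed
  ultimately have "congruence S m ?R" unfolding congruence_def by blast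
  moreover have "(u, v) \<in> ?R" using u_mem v_mem by (auto simp: collapse_def)
  moreover obtain x where "x \<in> S0" "x \<noteq> z" using nontrivial by blast
  ultimately have "(x, z) \<in> ?R" using related_to_zero by blast
  then show False using \<open>x \<in> S0\<close> \<open>x \<noteq> z\<close> u_notin v_notin by (auto simp: collapse_def)
qed

lemma with_one_cases: "x \<in> with_one S \<Longrightarrow> x \<in> Some ` S0 \<or> x \<in> with_one {u, v}"
  using carrier by (auto simp: with_one_def)

lemma omult_S0:
  assumes "x \<in> with_one S" "y \<in> Some ` S0"
  shows "omult m x y \<in> Some ` S0" "omult m y x \<in> Some ` S0"
  using assms ideal_mult[OF ideal] by (auto simp: with_one_def)

lemma J_class_subset:
  assumes b: "b \<in> S0" "b \<noteq> z"
  shows "J_class S m b \<subseteq> {b, m b u, m b v}"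
proof
  fix y assume "y \<in> J_class S m b"
  have bS: "b \<in> S" using b N_subset by blast
  then obtain s t s' t' where
    st: "s \<in> with_one S" "t \<in> with_one S" "s' \<in> with_one S" "t' \<in> with_one S" and
    y: "omult m (omult m s (Some b)) t = Some y" and
    stab: "(omult m s' s, omult m t t') \<in> stabilisers S m b"
    using mem_J_classE[OF semigroup _ \<open>y \<in> J_class S m b\<close>] by blast
  have not_nil: "omult m s' s \<notin> Some ` S0" "omult m t t' \<notin> Some ` S0"
    using stabilised_by_nil_eq_zero[OF bS stab] b(2) by auto
  then have s'_s: "omult m s' s \<in> with_one {u, v}" and s: "s \<in> with_one {u, v}"
    and t: "t \<in> with_one {u, v}"
    using with_one_cases omult_S0 st omult_closed[OF semigroup] by meson+
  have sb: "omult m s (Some b) = Some b"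
  proof (cases s)
    case (Some w)
    then obtain p where p: "omult m s' s = Some p" "p \<in> {u, v}"
      using s'_s by (cases s') (auto simp: with_one_def)
    have w: "w \<in> {u, v}" using s Some by (auto simp: with_one_def)
    have wS: "Some w \<in> with_one S" and pS: "Some p \<in> with_one S" and bS': "Some b \<in> with_one S"
      using w p(2) u_mem v_mem bS by (auto simp: with_one_def)
    have tt': "omult m t t' \<in> with_one S" using st omult_closed[OF semigroup] by blast
    have "omult m s (Some b) = omult m (Some w) (omult m (omult m (Some p) (Some b)) (omult m t t'))"
      using stab p(1) Some by (simp add: stabilisers_def)
    also have "\<dots> = omult m (omult m (omult m (Some w) (Some p)) (Some b)) (omult m t t')"
      using omult_assoc[OF semigroup wS _ tt', of "omult m (Some p) (Some b)"]
        omult_assoc[OF semigroup wS pS bS'] omult_closed[OF semigroup pS bS'] by metis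
    also have "\<dots> = Some b"
      using right_zero[OF w p(2)] stab p(1) by (simp add: stabilisers_def)
    finally show ?thesis .
  qed simp
  show "y \<in> {b, m b u, m b v}"
    using y sb t by (auto simp: with_one_def)
qed

lemma J_class_card_2: "\<exists>b\<in>S0. card (J_class S m b) = 2"
proof -
  obtain c where c: "c \<in> S0" "m c u \<noteq> m c v" using separating_element by blast
  have cS: "c \<in> S" using c N_subset by blast
  have cuv_S0: "m c u \<in> S0" "m c v \<in> S0" using ideal_mult[OF ideal u_mem c(1)] ideal_mult[OF ideal v_mem c(1)] by auto
  have right_mult: "m (m c w) w' = m c w'" if "w \<in> {u, v}" "w' \<in> {u, v}" for w w'
    using that semigroup_assoc[OF semigroup cS, of w w'] right_zero u_mem v_mem by auto
  obtain b where b: "b \<in> {m c u, m c v}" "b \<noteq> z" using c(2) by blast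
  have bS0: "b \<in> S0" using b(1) cuv_S0 by blast
  have bu_bv: "m b u = m c u" "m b v = m c v" using b(1) right_mult by auto
  have generate: "m c u \<in> principal_ideal S m (m c v)" "m c v \<in> principal_ideal S m (m c u)"
    using mult_mem_principal_ideal[OF u_mem, of m "m c v"] mult_mem_principal_ideal[OF v_mem, of m "m c u"]
      right_mult by auto
  have "J_class S m b = {m c u, m c v}"
  proof
    show "J_class S m b \<subseteq> {m c u, m c v}" using J_class_subset[OF bS0 b(2)] b(1) bu_bv by auto
    have "y \<in> J_class S m b" if "y \<in> {m c u, m c v}" for y
    proof (rule mem_J_classI[OF semigroup])
      show "b \<in> S" "y \<in> S" using bS0 that cuv_S0 N_subset by auto
      show "y \<in> principal_ideal S m b" "b \<in> principal_ideal S m y"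
        using that b(1) generate mem_principal_ideal_self[of _ S m] by auto
    qed
    then show "{m c u, m c v} \<subseteq> J_class S m b" by blast
  qed
  then show ?thesis using bS0 c(2) by (metis card_2_iff)
qed

end

theorem proposition4:
  fixes S S0 S1 :: "'a set" and m :: "'a \<Rightarrow> 'a \<Rightarrow> 'a"
  assumes "T2R S m S0 S1"
  shows "\<exists>b\<in>S0. card (J_class S m b) = 2"
proof -
  obtain z where z: "nontrivial_nil_with_zero S0 m z"
    using assms by (auto simp: T2R_def)
  obtain u v where uv: "S1 = {u, v}" "u \<noteq> v" and rz: "\<forall>x\<in>S1. \<forall>y\<in>S1. m x y = y"
    using assms by (auto simp: T2R_def right_zero_2_def card_2_iff)
  interpret T2R_decomposition S S0 m z u v
    using assms z uv rz
    unfolding T2R_def Delta_semigroup_def nontrivial_nil_with_zero_def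
    by unfold_locales auto
  show ?thesis by (rule J_class_card_2)
qed

end
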